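(* In the linear setting of the context, suppose $f(\phi_{\min})<0$. Then for every $A>0$ and every $Q_A\in\mathbb R$, setting $z=Q_A/A$, the linear pump-leak system has a unique steady state $(\mathbf c^*,v^*,\phi^* )$; the map $(A,Q_A)\mapsto v^*$ is $C^1$ on $(0,\infty)\times\mathbb R$ and $$\frac{\partial v^*}{\partial A}=\Big(\big(\tfrac{Q_A}{v^*}\big)^2+f''(\phi^* )\tfrac{A}{v^*}\Big)^{-1}f''(\phi^* )>0,\qquad \frac{\partial v^*}{\partial Q_A}=\Big(\big(\tfrac{Q_A}{v^*}\big)^2+f''(\phi^* )\tfrac{A}{v^*}\Big)^{-1}\frac{Q_A}{v^*}.$$
   Context: Fix an integer $N\ge2$, real valences $z_1,\dots,z_N$ not all zero, positive constants $c_1^{\rm e},\dots,c_N^{\rm e}$ with $\sum_kz_kc_k^{\rm e}=0$. Let $L$ be a real symmetric positive definite $N\times N$ matrix, $\mathbf p\in\mathbb R^N$ constant, $\zeta>0$, $\mathbf q=L^{-1}\mathbf p$, and $f(\phi)=\sum_k c_k^{\rm e}(\exp(-q_k-z_k\phi)-1)$, which has a unique minimizer $\phi_{\min}$ on $\mathbb R$. For $A>0$ and real $z$, and $\mathbf c\in(0,\infty)^N$, $v>0$, $\phi\in\mathbb R$, set $\mu_k=\ln(c_k/c_k^{\rm e})+z_k\phi$, $\pi_{\rm w}=\sum_kc_k^{\rm e}-(\sum_kc_k+A/v)$. The linear pump-leak system is $\frac{d}{dt}(v\mathbf c)=-L\boldsymbol\mu-\mathbf p$, $0=\sum_kz_kc_k+zA/v$,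 $\frac{dv}{dt}=-\zeta\pi_{\rm w}$; a steady state is a point $(\mathbf c,v,\phi)\in(0,\infty)^N\times(0,\infty)\times\mathbb R$ with $\sum_kz_kc_k+zA/v=0$, $L\boldsymbol\mu+\mathbf p=0$, $\pi_{\rm w}=0$. *)

theory Defs
  imports "HOL-Analysis.Analysis"
begin

text \<open>Linear pump-leak model. Species are indexed by a finite type 'n (N = CARD('n)).
  zv = valences z_k, ce = external concentrations c_k^e, L the leak matrix, p the pump vector.\<close>

definition mu :: "real^'n \<Rightarrow> real^'n \<Rightarrow> real^'n \<Rightarrow> real \<Rightarrow> real^'n" where
  "mu zv ce c \<phi> = (\<chi> k. ln (c$k / ce$k) + zv$k * \<phi>)"

definition pi_w :: "real^'n \<Rightarrow> real^'n \<Rightarrow> real \<Rightarrow> real \<Rightarrow> real" where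
  "pi_w ce c A v = (\<Sum>k\<in>UNIV. ce$k) - ((\<Sum>k\<in>UNIV. c$k) + A / v)"

definition steady_state ::
  "real^'n \<Rightarrow> real^'n \<Rightarrow> real^'n^'n \<Rightarrow> real^'n \<Rightarrow> real \<Rightarrow> real \<Rightarrow> real^'n \<Rightarrow> real \<Rightarrow> real \<Rightarrow> bool" where
  "steady_state zv ce L p A z c v \<phi> \<longleftrightarrow>
     (\<forall>k. c$k > 0) \<and> v > 0 \<and>
     (\<Sum>k\<in>UNIV. zv$k * c$k) + z * A / v = 0 \<and>
     L *v mu zv ce c \<phi> + p = 0 \<and>
     pi_w ce c A v = 0"

definition fpl :: "real^'n \<Rightarrow> real^'n \<Rightarrow> real^'n^'n \<Rightarrow> real^'n \<Rightarrow> real \<Rightarrow> real" where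
  "fpl zv ce L p \<phi> = (\<Sum>k\<in>UNIV. ce$k * (exp (- (matrix_inv L *v p)$k - zv$k * \<phi>) - 1))"

definition phi_min :: "real^'n \<Rightarrow> real^'n \<Rightarrow> real^'n^'n \<Rightarrow> real^'n \<Rightarrow> real" where
  "phi_min zv ce L p = (THE \<phi>. \<forall>\<psi>. fpl zv ce L p \<phi> \<le> fpl zv ce L p \<psi>)"

definition vstar :: "real^'n \<Rightarrow> real^'n \<Rightarrow> real^'n^'n \<Rightarrow> real^'n \<Rightarrow> real \<Rightarrow> real \<Rightarrow> real" where
  "vstar zv ce L p A QA = (THE v. \<exists>c \<phi>. steady_state zv ce L p A (QA / A) c v \<phi>)"

definition phistar :: "real^'n \<Rightarrow> real^'n \<Rightarrow> real^'n^'n \<Rightarrow> real^'n \<Rightarrow> real \<Rightarrow> real \<Rightarrow> real" where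
  "phistar zv ce L p A QA = (THE \<phi>. \<exists>c v. steady_state zv ce L p A (QA / A) c v \<phi>)"

end

theory Submission
  imports Defs
begin

(* Writing q = L^-1 p, the leak balance L mu + p = 0 forces mu = -q (L is positive definite, hence
   invertible), so a steady state is determined by its potential phi: the concentrations are the
   Boltzmann values c_k = ce_k exp(-q_k - z_k phi), osmotic balance reads A/v = -f(phi), and
   electroneutrality becomes the balance equation f'(phi) + z f(phi) = 0 with z = Q_A/A.

   The analytic core is a locale convex_well about a C^2 function f with f'' > 0 which is negative
   somewhere and nonnegative far out on both sides: for every z the balance equation has exactly one
   solution pot z with f (pot z) < 0, since -f'/f is strictly increasing there; pot is the inverse of
   -f'/f, hence differentiable, and the volume vol A Q = -A / f (pot (Q/A)) is differentiable with
   continuous partials of the required form. *)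

text \<open>The field identity that turns the chain-rule derivative of \<open>-a / f (pot (q/a))\<close> into the
  stated partial derivatives; here \<open>D\<close> is the denominator and \<open>F, F1, F2\<close> are \<open>f, f', f''\<close> at the
  balance point.\<close>

lemma vol_derivative_identity:
  fixes F F1 F2 D A Q h k :: real
  assumes "F \<noteq> 0" "A \<noteq> 0" "D \<noteq> 0"
    and "F1 = - (Q * F / A)" "F2 = ((Q * F / A)\<^sup>2 - D) / F"
  shows "(- h * F - - A * ((k * A - Q * h) / (A * A) * (F1 * inverse (D / (F * F))))) / (F * F)
    = inverse D * F2 * h + inverse D * (Q / (- A / F)) * k"
  unfolding assms(4,5) using assms(1-3) by (simp add: field_simps power2_eq_square)

locale convex_well =
  fixes f f1 f2 :: "real \<Rightarrow> real" and x0 :: real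
  assumes f_deriv: "\<And>x. (f has_real_derivative f1 x) (at x)"
    and f1_deriv: "\<And>x. (f1 has_real_derivative f2 x) (at x)"
    and f2_cont: "continuous_on UNIV f2"
    and f2_pos: "\<And>x. f2 x > 0"
    and f_x0_neg: "f x0 < 0"
    and nonneg_left: "\<exists>l<x0. f l \<ge> 0"
    and nonneg_right: "\<exists>r>x0. f r \<ge> 0"
begin

lemma isCont_f: "isCont f x"
  using f_deriv DERIV_isCont by blast

lemma isCont_f1: "isCont f1 x"
  using f1_deriv DERIV_isCont by blast

lemma continuous_on_f: "continuous_on S f"
  by (simp add: isCont_f continuous_at_imp_continuous_on)

lemma continuous_on_f1: "continuous_on S f1"
  by (simp add: isCont_f1 continuous_at_imp_continuous_on)

lemma f1_strict_mono: "x < y \<Longrightarrow> f1 x < f1 y"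
  by (rule DERIV_pos_imp_increasing) (use f1_deriv f2_pos in blast)+

lemma below_max:
  assumes "x < t" "t < y"
  shows "f t < max (f x) (f y)"
proof (rule ccontr)
  assume "\<not> ?thesis"
  hence h: "f x \<le> f t" "f y \<le> f t" by auto
  obtain u where u: "x < u" "u < t" "f t - f x = (t - x) * f1 u"
    using MVT2[OF assms(1), of f f1] f_deriv by blast
  obtain w where w: "t < w" "w < y" "f y - f t = (y - t) * f1 w"
    using MVT2[OF assms(2), of f f1] f_deriv by blast
  have "0 \<le> (t - x) * f1 u" using u h by simp
  hence "0 \<le> f1 u" using u by (simp add: zero_le_mult_iff)
  moreover have "(y - t) * f1 w \<le> 0" using w h by simp
  hence "f1 w \<le> 0" using w by (simp add: mult_le_0_iff)
  moreover have "f1 u < f1 w" using f1_strict_mono u w by simp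
  ultimately show False by simp
qed

lemma zeros_around:
  obtains a b where "a < x0" "x0 < b" "f a = 0" "f b = 0" "f1 a < 0" "f1 b > 0"
proof -
  obtain l where l: "l < x0" "f l \<ge> 0" using nonneg_left by blast
  obtain r where r: "r > x0" "f r \<ge> 0" using nonneg_right by blast
  obtain a where a: "l \<le> a" "a \<le> x0" "f a = 0"
    using IVT2'[of f x0 0 l] l f_x0_neg continuous_on_f by auto
  obtain b where b: "x0 \<le> b" "b \<le> r" "f b = 0"
    using IVT'[of f x0 0 r] r f_x0_neg continuous_on_f by auto
  have ax0: "a < x0" and x0b: "x0 < b" using a b f_x0_neg by (auto simp: order.order_iff_strict)
  obtain u where u: "a < u" "u < x0" "f x0 - f a = (x0 - a) * f1 u"
    using MVT2[OF ax0, of f f1] f_deriv by blast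
  have "f1 u < 0" using u a f_x0_neg ax0 by (simp add: mult_less_0_iff)
  hence "f1 a < 0" using f1_strict_mono[OF u(1)] by simp
  moreover obtain w where w: "x0 < w" "w < b" "f b - f x0 = (b - x0) * f1 w"
    using MVT2[OF x0b, of f f1] f_deriv by blast
  have "0 < (b - x0) * f1 w" using w b f_x0_neg by simp
  hence "f1 w > 0" using x0b by (simp add: zero_less_mult_iff)
  hence "f1 b > 0" using f1_strict_mono[OF w(2)] by simp
  ultimately show thesis using that ax0 x0b a b by blast
qed

text \<open>For every \<open>z\<close> the balance equation \<open>f' t + z f t = 0\<close> has a solution where \<open>f\<close> is negative:
  the left side changes sign between the two zeros of \<open>f\<close>.\<close>

lemma balance_exists: "\<exists>t. f t < 0 \<and> f1 t + z * f t = 0"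
proof -
  obtain a b where ab: "a < x0" "x0 < b" "f a = 0" "f b = 0" "f1 a < 0" "f1 b > 0"
    using zeros_around by blast
  have "continuous_on {a..b} (\<lambda>t. f1 t + z * f t)"
    by (intro continuous_intros continuous_on_f continuous_on_f1)
  then obtain t where t: "a \<le> t" "t \<le> b" "f1 t + z * f t = 0"
    using IVT'[of "\<lambda>t. f1 t + z * f t" a 0 b] ab by auto
  have "a < t" "t < b" using t ab by (auto simp: order.order_iff_strict)
  hence "f t < 0" using below_max[of a t b] ab by simp
  thus ?thesis using t by blast
qed

text \<open>On the set where \<open>f < 0\<close>, the ratio \<open>-f'/f\<close> has derivative \<open>(f'\<^sup>2 - f f'')/f\<^sup>2 > 0\<close>;
  hence the balance equation has at most one solution there.\<close>

definition ratio :: "real \<Rightarrow> real" where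
  "ratio t = - f1 t / f t"

definition ratio_deriv :: "real \<Rightarrow> real" where
  "ratio_deriv t = (f1 t * f1 t - f2 t * f t) / (f t * f t)"

lemma ratio_deriv_pos:
  assumes "f t < 0"
  shows "ratio_deriv t > 0"
proof -
  have "f2 t * f t < 0" using f2_pos[of t] assms by (simp add: mult_pos_neg)
  hence "f2 t * f t < f1 t * f1 t" by (smt (verit) zero_le_square)
  moreover have "0 < f t * f t" using assms by (simp add: mult_neg_neg)
  ultimately show ?thesis unfolding ratio_deriv_def by simp
qed

lemma has_real_derivative_ratio:
  "f t \<noteq> 0 \<Longrightarrow> (ratio has_real_derivative ratio_deriv t) (at t)"
  unfolding ratio_def[abs_def] ratio_deriv_def
  by (auto intro!: derivative_eq_intros f_deriv f1_deriv simp: field_simps)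

lemma balance_iff_ratio: "f t < 0 \<Longrightarrow> f1 t + z * f t = 0 \<longleftrightarrow> ratio t = z"
  unfolding ratio_def by (auto simp: field_simps)

lemma balance_unique:
  assumes "f s < 0" "f t < 0" "f1 s + z * f s = 0" "f1 t + z * f t = 0"
  shows "s = t"
proof -
  have less: False if st: "x < y" and fx: "f x < 0" and fy: "f y < 0"
    and eq: "ratio x = ratio y" for x y
  proof -
    have neg: "f u < 0" if "x \<le> u" "u \<le> y" for u
      using below_max[of x u y] that fx fy by (cases "u = x \<or> u = y") auto
    obtain u where u: "x < u" "u < y" "ratio y - ratio x = (y - x) * ratio_deriv u"
      using MVT2[OF st, of ratio ratio_deriv] has_real_derivative_ratio neg
      by (metis less_irrefl)
    have "0 < (y - x) * ratio_deriv u"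
      using st u neg ratio_deriv_pos by simp
    thus False using u eq by simp
  qed
  have "ratio s = ratio t" using assms balance_iff_ratio by simp
  thus ?thesis using less[of s t] less[of t s] assms by (cases s t rule: linorder_cases) auto
qed

definition pot :: "real \<Rightarrow> real" where
  "pot z = (THE t. f t < 0 \<and> f1 t + z * f t = 0)"

lemma pot: "f (pot z) < 0" "f1 (pot z) + z * f (pot z) = 0"
proof -
  have "f (pot z) < 0 \<and> f1 (pot z) + z * f (pot z) = 0"
    unfolding pot_def by (rule theI') (use balance_exists balance_unique in blast)
  thus "f (pot z) < 0" "f1 (pot z) + z * f (pot z) = 0" by auto
qed

lemma pot_eqI: "f t < 0 \<Longrightarrow> f1 t + z * f t = 0 \<Longrightarrow> pot z = t"
  using pot balance_unique by blast

lemma ratio_pot: "ratio (pot z) = z"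
  using pot balance_iff_ratio by blast

lemma pot_ratio: "f t < 0 \<Longrightarrow> pot (ratio t) = t"
  by (rule pot_eqI) (auto simp: ratio_def field_simps)

text \<open>As a local inverse of the strictly increasing function \<open>ratio\<close>, \<open>pot\<close> is continuous and
  differentiable, with derivative \<open>1 / ratio' (pot z)\<close>.\<close>

lemma isCont_pot: "isCont pot z"
proof -
  let ?x = "pot z"
  have "eventually (\<lambda>u. f u < 0) (at ?x)"
    using order_tendstoD(2)[OF isCont_f[of ?x, unfolded isCont_def] pot(1)] .
  then obtain e where e: "e > 0" "\<And>u. u \<noteq> ?x \<Longrightarrow> dist u ?x < e \<Longrightarrow> f u < 0"
    unfolding eventually_at by blast
  have neg: "f u < 0" if "\<bar>u - ?x\<bar> \<le> e/2" for u
    using e that pot(1) by (cases "u = ?x") (auto simp: dist_real_def)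
  have "isCont pot (ratio ?x)"
  proof (rule isCont_inverse_function[where d="e/2" and f=ratio and g=pot and x="?x"])
    show "0 < e/2" using e by simp
    show "pot (ratio u) = u" if "\<bar>u - ?x\<bar> \<le> e/2" for u
      using pot_ratio neg that by blast
    show "isCont ratio u" if "\<bar>u - ?x\<bar> \<le> e/2" for u
      unfolding ratio_def[abs_def] using neg[OF that]
      by (intro continuous_intros isCont_f isCont_f1) auto
  qed
  thus ?thesis using ratio_pot by simp
qed

lemma continuous_on_pot: "continuous_on S pot"
  by (simp add: isCont_pot continuous_at_imp_continuous_on)

lemma has_real_derivative_pot: "(pot has_real_derivative inverse (ratio_deriv (pot z))) (at z)"
proof (rule DERIV_inverse_function[where a = "z - 1" and b = "z + 1"])
  show "(ratio has_real_derivative ratio_deriv (pot z)) (at (pot z))"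
    using has_real_derivative_ratio[of "pot z"] pot(1)[of z] by simp
  show "ratio_deriv (pot z) \<noteq> 0" using ratio_deriv_pos pot(1) by (metis less_irrefl)
qed (auto simp: ratio_pot isCont_pot)

definition vol :: "real \<Rightarrow> real \<Rightarrow> real" where
  "vol A Q = - A / f (pot (Q / A))"

definition vol_den :: "real \<Rightarrow> real \<Rightarrow> real" where
  "vol_den A Q = (Q / vol A Q)\<^sup>2 + f2 (pot (Q / A)) * (A / vol A Q)"

definition vol_dA :: "real \<Rightarrow> real \<Rightarrow> real" where
  "vol_dA A Q = inverse (vol_den A Q) * f2 (pot (Q / A))"

definition vol_dQ :: "real \<Rightarrow> real \<Rightarrow> real" where
  "vol_dQ A Q = inverse (vol_den A Q) * (Q / vol A Q)"

lemma vol_pos: "A > 0 \<Longrightarrow> vol A Q > 0"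
  unfolding vol_def using pot(1) by (simp add: divide_pos_neg)

lemma vol_den_pos: "A > 0 \<Longrightarrow> vol_den A Q > 0"
  unfolding vol_den_def using vol_pos f2_pos
  by (intro add_nonneg_pos) (simp_all add: mult_pos_pos)

lemma vol_dA_pos: "A > 0 \<Longrightarrow> vol_dA A Q > 0"
  unfolding vol_dA_def using vol_den_pos f2_pos by simp

text \<open>At the balance point \<open>f' = -(Q/A) f\<close>, so with \<open>v = -A/f\<close> the denominator equals
  \<open>(Q f/A)\<^sup>2 - f'' f\<close>, i.e. \<open>f\<^sup>2\<close> times the derivative of \<open>ratio\<close>.\<close>

lemma vol_den_alt:
  assumes "A > 0"
  shows "vol_den A Q = (Q * f (pot (Q / A)) / A)\<^sup>2 - f2 (pot (Q / A)) * f (pot (Q / A))"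
  unfolding vol_den_def vol_def using pot(1)[of "Q / A"] assms
  by (simp add: field_simps power2_eq_square)

lemma vol_den_eq_ratio_deriv:
  assumes "A > 0"
  shows "vol_den A Q = f (pot (Q / A)) * f (pot (Q / A)) * ratio_deriv (pot (Q / A))"
proof -
  let ?t = "pot (Q / A)"
  have f1t: "f1 ?t = - (Q * f ?t / A)" using pot(2)[of "Q / A"] assms by (simp add: field_simps)
  show ?thesis
    unfolding vol_den_alt[OF assms] ratio_deriv_def f1t using pot(1)[of "Q / A"] assms
    by (simp add: field_simps power2_eq_square)
qed

lemma has_derivative_vol:
  assumes A: "A > 0"
  shows "((\<lambda>(a, q). vol a q) has_derivative (\<lambda>(h, k). vol_dA A Q * h + vol_dQ A Q * k)) (at (A, Q))"
proof -
  define t where "t = pot (Q / A)"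
  define D where "D = vol_den A Q"
  have ft: "f t < 0" and f1t: "f1 t = - (Q * f t / A)"
    using pot[of "Q / A"] A unfolding t_def by (auto simp: field_simps)
  have D: "D > 0" using vol_den_pos[OF A, of Q] unfolding D_def .
  have rd: "ratio_deriv t = D / (f t * f t)"
    using vol_den_eq_ratio_deriv[OF A, of Q] ft unfolding D_def t_def[symmetric] by simp
  have f2t: "f2 t = ((Q * f t / A)\<^sup>2 - D) / f t"
    using vol_den_alt[OF A, of Q] ft unfolding D_def t_def[symmetric] by (simp add: field_simps)
  have dfpot: "((\<lambda>z. f (pot z)) has_real_derivative f1 t * inverse (ratio_deriv t))
      (at (snd (A, Q) / fst (A, Q)))"
    using DERIV_chain2[OF f_deriv has_real_derivative_pot] unfolding t_def by simp
  have dquot: "((\<lambda>x. snd x / fst x) has_derivative (\<lambda>h. (snd h * A - Q * fst h) / (A * A))) (at (A, Q))"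
    using A by (auto intro!: derivative_eq_intros)
  have dG: "((\<lambda>x. f (pot (snd x / fst x))) has_derivative
      (\<lambda>h. (snd h * A - Q * fst h) / (A * A) * (f1 t * inverse (ratio_deriv t)))) (at (A, Q))"
    using DERIV_compose_FDERIV[OF dfpot dquot] .
  have "((\<lambda>x. - fst x / f (pot (snd x / fst x))) has_derivative
      (\<lambda>h. (- fst h * f t - - A * ((snd h * A - Q * fst h) / (A * A) * (f1 t * inverse (ratio_deriv t))))
        / (f t * f t))) (at (A, Q))"
    using has_derivative_divide'[OF has_derivative_minus[OF has_derivative_fst[OF has_derivative_ident]] dG] ft
    unfolding t_def by simp
  moreover have "(\<lambda>(a, q). vol a q) = (\<lambda>x. - fst x / f (pot (snd x / fst x)))"
    by (simp add: vol_def case_prod_unfold)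
  moreover have "(\<lambda>h. (- fst h * f t - - A * ((snd h * A - Q * fst h) / (A * A)
        * (f1 t * inverse (ratio_deriv t)))) / (f t * f t)) = (\<lambda>(h, k). vol_dA A Q * h + vol_dQ A Q * k)"
    unfolding vol_dA_def vol_dQ_def vol_def t_def[symmetric] D_def[symmetric] case_prod_unfold rd
    using vol_derivative_identity[OF _ _ _ f1t f2t] ft A D by simp
  ultimately show ?thesis by simp
qed

lemma continuous_on_comp_pot:
  assumes "continuous_on UNIV g"
  shows "continuous_on ({0<..} \<times> UNIV) (\<lambda>x. g (pot (snd x / fst x)))"
proof -
  have "continuous_on ({0<..} \<times> UNIV) (\<lambda>x. pot (snd x / fst x))"
    by (rule continuous_on_compose2[OF continuous_on_pot]) (auto intro!: continuous_intros)
  thus ?thesis by (rule continuous_on_compose2[OF assms]) auto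
qed

lemma continuous_on_vol: "continuous_on ({0<..} \<times> UNIV) (\<lambda>x. vol (fst x) (snd x))"
  unfolding vol_def using pot(1)
  by (intro continuous_intros continuous_on_comp_pot continuous_on_f) (auto simp: less_imp_neq)

lemma continuous_on_vol_den: "continuous_on ({0<..} \<times> UNIV) (\<lambda>x. vol_den (fst x) (snd x))"
  unfolding vol_den_def
  by (intro continuous_intros continuous_on_comp_pot continuous_on_vol f2_cont)
    (auto simp: vol_pos[THEN order_less_imp_not_eq2])

lemma continuous_on_vol_dA: "continuous_on ({0<..} \<times> UNIV) (\<lambda>(a, q). vol_dA a q)"
  unfolding vol_dA_def case_prod_unfold
  by (intro continuous_intros continuous_on_comp_pot continuous_on_vol_den f2_cont)
    (auto simp: vol_den_pos[THEN order_less_imp_not_eq2])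

lemma continuous_on_vol_dQ: "continuous_on ({0<..} \<times> UNIV) (\<lambda>(a, q). vol_dQ a q)"
  unfolding vol_dQ_def case_prod_unfold
  by (intro continuous_intros continuous_on_vol continuous_on_vol_den)
    (auto simp: vol_pos[THEN order_less_imp_not_eq2] vol_den_pos[THEN order_less_imp_not_eq2])

end

locale pump_leak =
  fixes zv ce p :: "real^'n" and L :: "real^'n^'n"
  assumes valence_nonzero: "\<exists>k. zv$k \<noteq> 0"
    and ce_pos: "\<And>k. ce$k > 0"
    and neutral: "(\<Sum>k\<in>UNIV. zv$k * ce$k) = 0"
    and L_pd: "\<And>x. x \<noteq> 0 \<Longrightarrow> x \<bullet> (L *v x) > 0"
begin

text \<open>\<open>q = L\<^sup>-\<^sup>1 p\<close>; at a steady state the chemical potentials are \<open>-q\<close>, so the concentrations are the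
  Boltzmann concentrations \<open>conc \<phi>\<close>, and \<open>fpl\<close> and its derivatives are sums over them.\<close>

definition q_vec :: "real^'n" where
  "q_vec = matrix_inv L *v p"

definition conc :: "real \<Rightarrow> real^'n" where
  "conc \<phi> = (\<chi> k. ce$k * exp (- q_vec$k - zv$k * \<phi>))"

definition dfpl :: "real \<Rightarrow> real" where
  "dfpl \<phi> = (\<Sum>k\<in>UNIV. ce$k * (exp (- q_vec$k - zv$k * \<phi>) * (- zv$k)))"

definition ddfpl :: "real \<Rightarrow> real" where
  "ddfpl \<phi> = (\<Sum>k\<in>UNIV. ce$k * (exp (- q_vec$k - zv$k * \<phi>) * (zv$k * zv$k)))"

lemma fpl_eq: "fpl zv ce L p = (\<lambda>\<phi>. \<Sum>k\<in>UNIV. ce$k * (exp (- q_vec$k - zv$k * \<phi>) - 1))"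
  by (simp add: fpl_def q_vec_def fun_eq_iff)

lemma sum_conc: "(\<Sum>k\<in>UNIV. conc \<phi> $ k) = fpl zv ce L p \<phi> + (\<Sum>k\<in>UNIV. ce$k)"
  by (simp add: fpl_eq conc_def right_diff_distrib sum_subtractf)

lemma charge_conc: "(\<Sum>k\<in>UNIV. zv$k * conc \<phi> $ k) = - dfpl \<phi>"
  by (simp add: dfpl_def conc_def sum_negf[symmetric] algebra_simps)

lemma has_real_derivative_fpl: "(fpl zv ce L p has_real_derivative dfpl \<phi>) (at \<phi>)"
  unfolding fpl_eq dfpl_def by (rule DERIV_sum) (auto intro!: derivative_eq_intros)

lemma has_real_derivative_dfpl: "(dfpl has_real_derivative ddfpl \<phi>) (at \<phi>)"
  unfolding dfpl_def ddfpl_def by (rule DERIV_sum) (auto intro!: derivative_eq_intros)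

lemma deriv2_fpl: "deriv (deriv (fpl zv ce L p)) = ddfpl"
proof -
  have "deriv (fpl zv ce L p) = dfpl"
    using has_real_derivative_fpl by (intro ext DERIV_imp_deriv)
  thus ?thesis using has_real_derivative_dfpl by (auto intro!: ext DERIV_imp_deriv)
qed

lemma continuous_on_ddfpl: "continuous_on UNIV ddfpl"
  unfolding ddfpl_def by (intro continuous_intros)

text \<open>Strict convexity of \<open>fpl\<close>: some valence is nonzero.\<close>

lemma ddfpl_pos: "ddfpl \<phi> > 0"
proof -
  obtain j where j: "zv$j \<noteq> 0" using valence_nonzero by blast
  show ?thesis
    unfolding ddfpl_def
  proof (rule sum_pos2[where i=j])
    have "zv$j * zv$j > 0" using j by (auto simp add: zero_less_mult_iff linorder_neq_iff)
    thus "0 < ce$j * (exp (- q_vec$j - zv$j * \<phi>) * (zv$j * zv$j))"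
      using ce_pos[of j] by simp
    show "0 \<le> ce$i * (exp (- q_vec$i - zv$i * \<phi>) * (zv$i * zv$i))" for i
      using ce_pos[of i] by (simp add: mult_nonneg_nonneg less_imp_le)
  qed auto
qed

text \<open>Electroneutrality of the bath forces valences of both signs.\<close>

lemma valences_both_signs: "(\<exists>k. zv$k > 0) \<and> (\<exists>k. zv$k < 0)"
proof -
  have pos_exists: "\<exists>k. w$k > 0" if w: "w$j \<noteq> 0" "(\<Sum>k\<in>UNIV. w$k * ce$k) = 0" for w :: "real^'n" and j
  proof (rule ccontr)
    assume "\<not> (\<exists>k. w$k > 0)"
    hence nonneg: "\<forall>k\<in>UNIV. 0 \<le> - (w$k * ce$k)"
      using ce_pos by (auto simp: not_less intro: mult_nonpos_nonneg less_imp_le)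
    have "(\<Sum>k\<in>UNIV. - (w$k * ce$k)) = 0" using w(2) by (simp add: sum_negf)
    hence "- (w$j * ce$j) = 0" by (subst (asm) sum_nonneg_eq_0_iff) (use nonneg in auto)
    thus False using w(1) ce_pos[of j] by simp
  qed
  obtain j where j: "zv$j \<noteq> 0" using valence_nonzero by blast
  have "\<exists>k. zv$k > 0" using pos_exists[of zv j] j neutral by blast
  moreover have "\<exists>k. (- zv)$k > 0"
    using pos_exists[of "- zv" j] j neutral by (simp add: sum_negf)
  ultimately show ?thesis by auto
qed

text \<open>\<open>fpl\<close> is nonnegative as soon as one summand \<open>ce$i exp(-q_vec$i - zv$i \<phi>)\<close> exceeds \<open>\<Sum>ce\<close>;
  hence it is nonnegative far to the left and far to the right.\<close>

lemma fpl_nonneg: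
  assumes "zv$i * \<phi> \<le> - q_vec$i - (\<Sum>k\<in>UNIV. ce$k) / ce$i"
  shows "fpl zv ce L p \<phi> \<ge> 0"
proof -
  let ?S = "\<Sum>k\<in>UNIV. ce$k"
  have "1 + ?S / ce$i \<le> exp (- q_vec$i - zv$i * \<phi>)"
    using assms exp_ge_add_one_self[of "- q_vec$i - zv$i * \<phi>"] by linarith
  hence "?S \<le> ce$i * exp (- q_vec$i - zv$i * \<phi>)"
    using ce_pos[of i] by (simp add: field_simps)
  also have "\<dots> \<le> (\<Sum>k\<in>UNIV. ce$k * exp (- q_vec$k - zv$k * \<phi>))"
    by (rule member_le_sum) (use ce_pos in \<open>auto intro: less_imp_le\<close>)
  also have "\<dots> = (\<Sum>k\<in>UNIV. conc \<phi> $ k)"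
    by (simp add: conc_def)
  finally show ?thesis using sum_conc[of \<phi>] by simp
qed

lemma fpl_nonneg_left: "\<exists>l<x. fpl zv ce L p l \<ge> 0"
proof -
  obtain i where i: "zv$i > 0" using valences_both_signs by blast
  define l where "l = min (x - 1) ((- q_vec$i - (\<Sum>k\<in>UNIV. ce$k) / ce$i) / zv$i)"
  have "zv$i * l \<le> - q_vec$i - (\<Sum>k\<in>UNIV. ce$k) / ce$i"
    using i mult_left_mono[of l "(- q_vec$i - (\<Sum>k\<in>UNIV. ce$k) / ce$i) / zv$i" "zv$i"]
    unfolding l_def by simp
  thus ?thesis using fpl_nonneg by (intro exI[of _ l]) (auto simp: l_def)
qed

lemma fpl_nonneg_right: "\<exists>r>x. fpl zv ce L p r \<ge> 0"
proof -
  obtain i where i: "zv$i < 0" using valences_both_signs by blast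
  define r where "r = max (x + 1) ((- q_vec$i - (\<Sum>k\<in>UNIV. ce$k) / ce$i) / zv$i)"
  have "zv$i * r \<le> - q_vec$i - (\<Sum>k\<in>UNIV. ce$k) / ce$i"
    using i mult_left_mono_neg[of "(- q_vec$i - (\<Sum>k\<in>UNIV. ce$k) / ce$i) / zv$i" r "zv$i"]
    unfolding r_def by simp
  thus ?thesis using fpl_nonneg by (intro exI[of _ r]) (auto simp: r_def)
qed

lemma convex_well_fpl:
  assumes "fpl zv ce L p (phi_min zv ce L p) < 0"
  shows "convex_well (fpl zv ce L p) dfpl ddfpl (phi_min zv ce L p)"
  by unfold_locales (use has_real_derivative_fpl has_real_derivative_dfpl continuous_on_ddfpl
      ddfpl_pos assms fpl_nonneg_left fpl_nonneg_right in auto)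

lemma invertible_L: "invertible L"
proof -
  have "\<forall>x. L *v x = 0 \<longrightarrow> x = 0"
    using L_pd by (metis inner_zero_right less_irrefl)
  thus ?thesis unfolding invertible_left_inverse matrix_left_invertible_ker .
qed

lemma leak_balance_iff: "L *v m + p = 0 \<longleftrightarrow> m = - q_vec"
proof -
  have "L ** matrix_inv L = mat 1 \<and> matrix_inv L ** L = mat 1"
    using invertible_L unfolding invertible_def matrix_inv_def by (rule someI_ex)
  hence inv: "L ** matrix_inv L = mat 1" "matrix_inv L ** L = mat 1" by auto
  have neg: "M *v (- x) = - (M *v x)" for M :: "real^'n^'n" and x
    using matrix_vector_mult_diff_distrib[of M 0 x] by simp
  show ?thesis
  proof
    assume "L *v m + p = 0"
    hence "L *v m = - p" by (simp add: eq_neg_iff_add_eq_0)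
    hence "matrix_inv L *v (L *v m) = matrix_inv L *v (- p)" by simp
    thus "m = - q_vec" using inv by (simp add: matrix_vector_mul_assoc neg q_vec_def)
  qed (use inv in \<open>simp add: q_vec_def matrix_vector_mul_assoc neg\<close>)
qed

lemma mu_eq_iff:
  assumes "\<And>k. c$k > 0"
  shows "mu zv ce c \<phi> = - q_vec \<longleftrightarrow> c = conc \<phi>"
proof -
  have "ln (c$k / ce$k) + zv$k * \<phi> = - q_vec$k \<longleftrightarrow> c$k = ce$k * exp (- q_vec$k - zv$k * \<phi>)" for k
  proof -
    have pos: "c$k / ce$k > 0" using assms[of k] ce_pos[of k] by simp
    have "ln (c$k / ce$k) + zv$k * \<phi> = - q_vec$k \<longleftrightarrow> ln (c$k / ce$k) = - q_vec$k - zv$k * \<phi>"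
      by linarith
    also have "\<dots> \<longleftrightarrow> c$k / ce$k = exp (- q_vec$k - zv$k * \<phi>)"
      using pos by (metis exp_ln ln_exp)
    also have "\<dots> \<longleftrightarrow> c$k = ce$k * exp (- q_vec$k - zv$k * \<phi>)"
      using ce_pos[of k] by (auto simp: field_simps)
    finally show ?thesis .
  qed
  thus ?thesis by (simp add: mu_def conc_def vec_eq_iff)
qed

lemma steady_state_iff:
  assumes A: "A > 0"
  shows "steady_state zv ce L p A z c v \<phi> \<longleftrightarrow>
    c = conc \<phi> \<and> fpl zv ce L p \<phi> < 0 \<and> dfpl \<phi> + z * fpl zv ce L p \<phi> = 0 \<and> v = - A / fpl zv ce L p \<phi>"
    (is "?ss \<longleftrightarrow> ?red")
proof
  assume ss: ?ss
  hence c: "c = conc \<phi>"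
    using mu_eq_iff leak_balance_iff unfolding steady_state_def by blast
  have v: "v > 0" and osm: "A / v = - fpl zv ce L p \<phi>"
    using ss unfolding steady_state_def pi_w_def c sum_conc by auto
  have neg: "fpl zv ce L p \<phi> < 0" using osm A v by (metis divide_pos_pos neg_0_less_iff_less)
  have "- dfpl \<phi> + z * (A / v) = 0"
    using ss unfolding steady_state_def c charge_conc by simp
  thus ?red using c neg osm v by (auto simp: field_simps)
next
  assume ?red
  hence c: "c = conc \<phi>" and neg: "fpl zv ce L p \<phi> < 0"
    and bal: "dfpl \<phi> + z * fpl zv ce L p \<phi> = 0" and v: "v = - A / fpl zv ce L p \<phi>" by auto
  have osm: "A / v = - fpl zv ce L p \<phi>" using v neg A by simp
  have "\<And>k. c$k > 0" using c ce_pos by (simp add: conc_def)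
  moreover have "v > 0" using v neg A by (simp add: divide_pos_neg)
  moreover have "L *v mu zv ce c \<phi> + p = 0"
    using calculation(1) mu_eq_iff leak_balance_iff c by blast
  moreover have "(\<Sum>k\<in>UNIV. zv$k * c$k) + z * A / v = 0"
    using bal osm unfolding c charge_conc by (simp add: times_divide_eq_right[symmetric])
  moreover have "pi_w ce c A v = 0" unfolding pi_w_def c sum_conc osm by simp
  ultimately show ?ss unfolding steady_state_def by blast
qed

end

locale pump_leak_well = pump_leak +
  assumes fmin_neg: "fpl zv ce L p (phi_min zv ce L p) < 0"
begin

sublocale W: convex_well "fpl zv ce L p" dfpl ddfpl "phi_min zv ce L p"
  by (rule convex_well_fpl[OF fmin_neg])

lemma steady_state_iff_pot:
  assumes "A > 0"
  shows "steady_state zv ce L p A (QA / A) c v \<phi> \<longleftrightarrow>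
    \<phi> = W.pot (QA / A) \<and> c = conc \<phi> \<and> v = W.vol A QA"
  unfolding steady_state_iff[OF assms] W.vol_def
  using W.pot W.pot_eqI by metis

lemma steady_state_pot:
  "A > 0 \<Longrightarrow> steady_state zv ce L p A (QA / A) (conc (W.pot (QA / A))) (W.vol A QA) (W.pot (QA / A))"
  by (simp add: steady_state_iff_pot)

lemma steady_state_unique:
  "A > 0 \<Longrightarrow> \<exists>!s. case s of (c, v, \<phi>) \<Rightarrow> steady_state zv ce L p A (QA / A) c v \<phi>"
  by (auto simp: steady_state_iff_pot)

lemma vstar_eq:
  assumes A: "A > 0"
  shows "vstar zv ce L p A QA = W.vol A QA"
  unfolding vstar_def
proof (rule the_equality)
  show "\<exists>c \<phi>. steady_state zv ce L p A (QA / A) c (W.vol A QA) \<phi>"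
    using steady_state_pot[OF A] by blast
qed (auto simp: steady_state_iff_pot[OF A])

lemma phistar_eq:
  assumes A: "A > 0"
  shows "phistar zv ce L p A QA = W.pot (QA / A)"
  unfolding phistar_def
proof (rule the_equality)
  show "\<exists>c v. steady_state zv ce L p A (QA / A) c v (W.pot (QA / A))"
    using steady_state_pot[OF A] by blast
qed (auto simp: steady_state_iff_pot[OF A])

end

theorem mainTheorem3:
  fixes zv ce p :: "real^'n" and L :: "real^'n^'n" and \<zeta> :: real
  assumes N2: "CARD('n) \<ge> 2"
    and z_nz: "\<exists>k. zv$k \<noteq> 0"
    and ce_pos: "\<forall>k. ce$k > 0"
    and neutral: "(\<Sum>k\<in>UNIV. zv$k * ce$k) = 0"
    and L_sym: "transpose L = L"
    and L_pd: "\<forall>x. x \<noteq> 0 \<longrightarrow> x \<bullet> (L *v x) > 0"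
    and zeta_pos: "\<zeta> > 0"
    and fmin_neg: "fpl zv ce L p (phi_min zv ce L p) < 0"
  defines "DA \<equiv> (\<lambda>A QA. inverse ((QA / vstar zv ce L p A QA)\<^sup>2
             + deriv (deriv (fpl zv ce L p)) (phistar zv ce L p A QA) * (A / vstar zv ce L p A QA))
             * deriv (deriv (fpl zv ce L p)) (phistar zv ce L p A QA))"
    and "DQ \<equiv> (\<lambda>A QA. inverse ((QA / vstar zv ce L p A QA)\<^sup>2
             + deriv (deriv (fpl zv ce L p)) (phistar zv ce L p A QA) * (A / vstar zv ce L p A QA))
             * (QA / vstar zv ce L p A QA))"
  shows "(\<forall>A QA. A > 0 \<longrightarrow> (\<exists>!s. case s of (c, v, \<phi>) \<Rightarrow> steady_state zv ce L p A (QA / A) c v \<phi>))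
    \<and> (\<forall>A QA. A > 0 \<longrightarrow>
          ((\<lambda>(a, q). vstar zv ce L p a q) has_derivative (\<lambda>(h, k). DA A QA * h + DQ A QA * k)) (at (A, QA)))
    \<and> continuous_on ({0<..} \<times> UNIV) (\<lambda>(a, q). DA a q)
    \<and> continuous_on ({0<..} \<times> UNIV) (\<lambda>(a, q). DQ a q)
    \<and> (\<forall>A QA. A > 0 \<longrightarrow> DA A QA > 0)"
proof -
  interpret pump_leak_well zv ce p L
    by unfold_locales (use z_nz ce_pos neutral L_pd fmin_neg in auto)
  have DA: "DA A QA = W.vol_dA A QA" and DQ: "DQ A QA = W.vol_dQ A QA" if "A > 0" for A QA
    unfolding DA_def DQ_def W.vol_dA_def W.vol_dQ_def W.vol_den_def
    using that by (simp_all add: vstar_eq phistar_eq deriv2_fpl)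
  have "((\<lambda>(a, q). vstar zv ce L p a q) has_derivative (\<lambda>(h, k). DA A QA * h + DQ A QA * k)) (at (A, QA))"
    if A: "A > 0" for A QA
    unfolding DA[OF A] DQ[OF A]
  proof (rule has_derivative_transform_within_open[OF W.has_derivative_vol[OF A], where s="{0<..} \<times> UNIV"])
    show "(case x of (a, q) \<Rightarrow> W.vol a q) = (case x of (a, q) \<Rightarrow> vstar zv ce L p a q)"
      if "x \<in> {0<..} \<times> UNIV" for x
      using that vstar_eq by (auto split: prod.split)
  qed (use A in \<open>auto intro: open_Times\<close>)
  moreover have "continuous_on ({0<..} \<times> UNIV) (\<lambda>(a, q). DA a q)"
    using W.continuous_on_vol_dA by (rule continuous_on_cong[THEN iffD1, OF refl, rotated]) (auto simp: DA)
  moreover have "continuous_on ({0<..} \<times> UNIV) (\<lambda>(a, q). DQ a q)"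
    using W.continuous_on_vol_dQ by (rule continuous_on_cong[THEN iffD1, OF refl, rotated]) (auto simp: DQ)
  ultimately show ?thesis
    using steady_state_unique W.vol_dA_pos DA by auto
qed

end
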